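(* Let $d,m\ge 1$ and let $\mathbf{G}\in\mathbb{R}^{dm\times dm}$ be a symmetric matrix satisfying: (P1) $\mathbf{G}$ is positive semidefinite; (P2) $\mathrm{rank}(\mathbf{G})\le d$; (P3) $\mathbf{G}_{ii}=\mathbf{I}$ for all $i\in\{1,\ldots,m\}$; (P4) $\mathbf{G}_{i,i+1}\in\mathbb{SO}(d)$ for all $i\in\{1,\ldots,m-1\}$. Then there exist $\mathbf{R}_1,\ldots,\mathbf{R}_m\in\mathbb{SO}(d)$ such that $\mathbf{G}_{ij}=\mathbf{R}_i^\top\mathbf{R}_j$ for all $i,j\in\{1,\ldots,m\}$.
   Context: $\mathbb{SO}(d)=\{\mathbf{R}\in\mathbb{R}^{d\times d}:\mathbf{R}^\top\mathbf{R}=\mathbf{I},\ \det\mathbf{R}=1\}$. For a matrix $\mathbf{X}\in\mathbb{R}^{dm\times dm}$, $\mathbf{X}_{ij}\in\mathbb{R}^{d\times d}$ denotes its $(i,j)$-th $d\times d$ block, i.e. $\mathbf{X}_{ij}(p,q)=\mathbf{X}((i-1)d+p,(j-1)d+q)$ for $p,q\in\{1,\ldots,d\}$. $\mathbf{I}$ is the $d\times d$ identity. *)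

theory Defs
  imports "Jordan_Normal_Form.DL_Rank" "Jordan_Normal_Form.Determinant"
begin

text \<open>Block indexing is 0-based: block i (for i < m) occupies rows/cols i*d .. i*d+d-1.\<close>

definition blk :: "nat \<Rightarrow> real mat \<Rightarrow> nat \<Rightarrow> nat \<Rightarrow> real mat" where
  "blk d X i j = mat d d (\<lambda>(p, q). X $$ (i * d + p, j * d + q))"

definition SO :: "nat \<Rightarrow> real mat set" where
  "SO d = {R. R \<in> carrier_mat d d \<and> transpose_mat R * R = 1\<^sub>m d \<and> det R = 1}"

definition psd :: "nat \<Rightarrow> real mat \<Rightarrow> bool" where
  "psd n G \<longleftrightarrow> G \<in> carrier_mat n n \<and> (\<forall>x \<in> carrier_vec n. 0 \<le> x \<bullet> (G *\<^sub>v x))"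

definition mat_rank :: "nat \<Rightarrow> real mat \<Rightarrow> nat" where
  "mat_rank n G = vec_space.rank n G"

end

theory Submission imports Defs begin

text \<open>The \<open>d\<close> columns of \<open>G\<close> through an identity diagonal block are linearly independent,
so if \<open>rank G \<le> d\<close> they span the column space; the coordinates of any column with respect to
them can be read off in the rows of that block, which gives \<open>G_ik = G_ij G_jk\<close> for all block
indices. With \<open>j = 0\<close> and symmetry, \<open>G_ij = G_0i\<^sup>T G_0j\<close>, and \<open>R_i = G_0i\<close> is a rotation by
induction, since \<open>G_0(i+1) = G_0i G_i(i+1)\<close>.\<close>

lemma (in vec_space) col_in_span_of_lin_indpt_cols:
  assumes A: "A \<in> carrier_mat n nc" and S: "S \<subseteq> set (cols A)" "lin_indpt S"
    and rk: "rank A \<le> card S" and c: "c < nc"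
  shows "col A c \<in> span S"
proof (rule ccontr)
  assume not_span: "col A c \<notin> span S"
  have S_carrier: "S \<subseteq> carrier_vec n" using S(1) A cols_dim by blast
  have col_carrier: "col A c \<in> carrier_vec n" using A c by simp
  have not_in: "col A c \<notin> S" using not_span in_own_span[OF S_carrier] by blast
  have "lin_indpt (S \<union> {col A c})"
    using lin_dep_iff_in_span[OF S_carrier S(2) col_carrier not_in] not_span by simp
  moreover have "S \<union> {col A c} \<subseteq> set (cols A)" using S(1) A c by (auto simp: in_set_conv_nth)
  ultimately have "card (S \<union> {col A c}) \<le> rank A" using rank_ge_card_indpt[OF A] by blast
  moreover have "finite S" using S(1) finite_subset by blast
  ultimately show False using rk not_in by simp
qed

lemma (in vec_space) lin_indpt_cols_of_unit_rows:
  assumes C: "C \<in> carrier_mat n d" and s: "s + d \<le> n"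
    and unit: "\<And>p q. p < d \<Longrightarrow> q < d \<Longrightarrow> C $$ (s + p, q) = (if p = q then 1 else 0)"
  shows "distinct (cols C)" and "lin_indpt (set (cols C))"
proof -
  show distinct: "distinct (cols C)"
  proof (subst distinct_conv_nth, intro allI impI)
    fix p q assume "p < length (cols C)" "q < length (cols C)" "p \<noteq> q"
    hence pq: "p < d" "q < d" "p \<noteq> q" using C by auto
    have "col C p $ (s + p) \<noteq> col C q $ (s + p)" using pq s C unit by simp
    thus "cols C ! p \<noteq> cols C ! q" using pq C by auto
  qed
  have mult_unit_row: "(C *\<^sub>v v) $ (s + p) = v $ p" if "v \<in> carrier_vec d" "p < d" for v p
  proof -
    have "(C *\<^sub>v v) $ (s + p) = (\<Sum>q<d. C $$ (s + p, q) * v $ q)"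
      using that s C by (simp add: scalar_prod_def lessThan_atLeast0)
    also have "\<dots> = (\<Sum>q<d. if p = q then v $ q else 0)"
      using that unit by (intro sum.cong) auto
    finally show ?thesis using that by simp
  qed
  show "lin_indpt (set (cols C))"
  proof
    assume "lin_dep (set (cols C))"
    then obtain v where v: "v \<in> carrier_vec d" "v \<noteq> 0\<^sub>v d" "C *\<^sub>v v = 0\<^sub>v n"
      using lin_depE[OF C _ distinct] by blast
    have "v = 0\<^sub>v d"
    proof (rule eq_vecI)
      fix p assume "p < dim_vec (0\<^sub>v d)"
      thus "v $ p = 0\<^sub>v d $ p" using mult_unit_row[OF v(1), of p] v(3) s by simp
    qed (use v in auto)
    with v(2) show False by simp
  qed
qed

lemma (in vec_space) low_rank_factor_through_unit_block:
  assumes A: "A \<in> carrier_mat n n" and rk: "rank A \<le> d" and s: "s + d \<le> n"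
    and unit: "\<And>p q. p < d \<Longrightarrow> q < d \<Longrightarrow> A $$ (s + p, s + q) = (if p = q then 1 else 0)"
    and r: "r < n" and c: "c < n"
  shows "A $$ (r, c) = (\<Sum>q<d. A $$ (r, s + q) * A $$ (s + q, c))"
proof -
  define C where "C = mat n d (\<lambda>(r, q). A $$ (r, s + q))"
  have C: "C \<in> carrier_mat n d" by (simp add: C_def)
  have C_unit: "C $$ (s + p, q) = (if p = q then 1 else 0)" if "p < d" "q < d" for p q
    using that s unit by (simp add: C_def)
  note distinct = lin_indpt_cols_of_unit_rows(1)[OF C s C_unit]
  have "set (cols C) \<subseteq> set (cols A)"
  proof
    fix x assume "x \<in> set (cols C)"
    then obtain q where "q < d" "x = col C q" using C by (auto simp: in_set_conv_nth)
    hence "s + q < n" "x = col A (s + q)" using s A by (auto simp: C_def)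
    thus "x \<in> set (cols A)" using A by (auto simp: in_set_conv_nth)
  qed
  moreover have "card (set (cols C)) = d" using distinct C by (simp add: distinct_card)
  ultimately have "col A c \<in> span (set (cols C))"
    using col_in_span_of_lin_indpt_cols[OF A _ lin_indpt_cols_of_unit_rows(2)[OF C s C_unit]] rk c
    by simp
  then obtain a where "lincomb a (set (cols C)) = col A c"
    using finite_in_span[of "set (cols C)"] C cols_dim by blast
  then obtain w where w: "w \<in> carrier_vec d" "col A c = C *\<^sub>v w"
    using mat_mult_eq_lincomb[OF C distinct] by (metis vec_carrier)
  have entry: "A $$ (x, c) = (\<Sum>q<d. A $$ (x, s + q) * w $ q)" if "x < n" for x
  proof -
    have "A $$ (x, c) = col A c $ x" using A c that by simp
    also have "\<dots> = (\<Sum>q<d. A $$ (x, s + q) * w $ q)"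
      unfolding w(2) using that w(1) by (simp add: C_def scalar_prod_def lessThan_atLeast0)
    finally show ?thesis .
  qed
  have "w $ p = A $$ (s + p, c)" if "p < d" for p
  proof -
    have "A $$ (s + p, c) = (\<Sum>q<d. A $$ (s + p, s + q) * w $ q)"
      using entry[of "s + p"] that s by simp
    also have "\<dots> = (\<Sum>q<d. if p = q then w $ q else 0)"
      using that unit by (intro sum.cong) auto
    finally show ?thesis using that by simp
  qed
  thus ?thesis using entry[OF r] by simp
qed

lemma block_index_less:
  fixes a m p d :: nat
  assumes "a < m" and "p < d"
  shows "a * d + p < d * m"
proof -
  have "a * d + p < Suc a * d" using assms(2) by simp
  also have "\<dots> \<le> m * d" using assms(1) by (intro mult_le_mono1) simp
  finally show ?thesis by (simp add: mult.commute)
qed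

lemma blk_mult_through_identity_block:
  fixes G :: "real mat"
  assumes G: "G \<in> carrier_mat (d * m) (d * m)" and rk: "mat_rank (d * m) G \<le> d"
    and unit: "blk d G j j = 1\<^sub>m d" and ijk: "i < m" "j < m" "k < m"
  shows "blk d G i k = blk d G i j * blk d G j k"
proof (rule eq_matI)
  have unit_entries: "G $$ (j * d + p, j * d + q) = (if p = q then 1 else 0)"
    if "p < d" "q < d" for p q
    using that arg_cong[OF unit, of "\<lambda>X. X $$ (p, q)"] by (simp add: blk_def)
  have block_end: "j * d + d \<le> d * m" using block_index_less[OF ijk(2), of "d - 1" d] by (cases d) auto
  have factor: "G $$ (r, c) = (\<Sum>l<d. G $$ (r, j * d + l) * G $$ (j * d + l, c))"
    if "r < d * m" "c < d * m" for r c
    by (rule vec_space.low_rank_factor_through_unit_block[OF G rk[unfolded mat_rank_def] block_end])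
      (simp_all add: unit_entries that)
  fix p q assume "p < dim_row (blk d G i j * blk d G j k)" "q < dim_col (blk d G i j * blk d G j k)"
  hence pq: "p < d" "q < d" by (auto simp: blk_def)
  have "blk d G i k $$ (p, q) = G $$ (i * d + p, k * d + q)" using pq by (simp add: blk_def)
  also have "\<dots> = (\<Sum>l<d. G $$ (i * d + p, j * d + l) * G $$ (j * d + l, k * d + q))"
    by (rule factor[OF block_index_less[OF ijk(1) pq(1)] block_index_less[OF ijk(3) pq(2)]])
  also have "\<dots> = (blk d G i j * blk d G j k) $$ (p, q)"
    using pq by (simp add: blk_def scalar_prod_def lessThan_atLeast0)
  finally show "blk d G i k $$ (p, q) = (blk d G i j * blk d G j k) $$ (p, q)" .
qed (auto simp: blk_def)

lemma blk_transpose: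
  fixes G :: "real mat"
  assumes G: "G \<in> carrier_mat (d * m) (d * m)" and sym: "transpose_mat G = G"
    and ij: "i < m" "j < m"
  shows "blk d G j i = transpose_mat (blk d G i j)"
proof (rule eq_matI)
  fix p q assume "p < dim_row (transpose_mat (blk d G i j))" "q < dim_col (transpose_mat (blk d G i j))"
  hence "p < d" "q < d" by (auto simp: blk_def)
  hence "j * d + p < d * m" "i * d + q < d * m" using block_index_less ij by auto
  hence "G $$ (j * d + p, i * d + q) = G $$ (i * d + q, j * d + p)"
    using G arg_cong[OF sym, of "\<lambda>X. X $$ (j * d + p, i * d + q)"] by simp
  thus "blk d G j i $$ (p, q) = transpose_mat (blk d G i j) $$ (p, q)"
    using \<open>p < d\<close> \<open>q < d\<close> by (simp add: blk_def)
qed (auto simp: blk_def)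

lemma one_mat_in_SO: "1\<^sub>m d \<in> SO d"
  by (simp add: SO_def)

lemma SO_mult_closed:
  assumes "A \<in> SO d" and "B \<in> SO d"
  shows "A * B \<in> SO d"
proof -
  have A: "A \<in> carrier_mat d d" "transpose_mat A * A = 1\<^sub>m d" "det A = 1"
    and B: "B \<in> carrier_mat d d" "transpose_mat B * B = 1\<^sub>m d" "det B = 1"
    using assms by (auto simp: SO_def)
  have "transpose_mat (A * B) * (A * B) = transpose_mat B * ((transpose_mat A * A) * B)"
    using A(1) B(1) by (simp add: transpose_mult assoc_mult_mat[of _ d d _ d _ d])
  also have "\<dots> = 1\<^sub>m d" using A(2) B by simp
  finally show ?thesis using A B by (simp add: SO_def det_mult[OF A(1) B(1)])
qed

theorem theorem1:
  fixes d m :: nat and G :: "real mat"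
  assumes "d \<ge> 1" and "m \<ge> 1"
    and "G \<in> carrier_mat (d * m) (d * m)"
    and "transpose_mat G = G"
    and "psd (d * m) G"
    and "mat_rank (d * m) G \<le> d"
    and "\<forall>i < m. blk d G i i = 1\<^sub>m d"
    and "\<forall>i. i + 1 < m \<longrightarrow> blk d G i (i + 1) \<in> SO d"
  shows "\<exists>R :: nat \<Rightarrow> real mat. (\<forall>i < m. R i \<in> SO d) \<and>
           (\<forall>i < m. \<forall>j < m. blk d G i j = transpose_mat (R i) * R j)"
proof -
  note G = assms(3) and sym = assms(4) and rk = assms(6) and unit = assms(7)
  have factor: "blk d G i k = blk d G i j * blk d G j k" if "i < m" "j < m" "k < m" for i j k
    using that unit by (intro blk_mult_through_identity_block[OF G rk]) auto
  have SO: "blk d G 0 i \<in> SO d" if "i < m" for i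
    using that
  proof (induction i)
    case 0
    thus ?case using unit one_mat_in_SO by simp
  next
    case (Suc i)
    hence "blk d G 0 (Suc i) = blk d G 0 i * blk d G i (Suc i)" using factor[of 0 i "Suc i"] by simp
    thus ?case using Suc assms(8) by (simp add: SO_mult_closed)
  qed
  have gram: "blk d G i j = transpose_mat (blk d G 0 i) * blk d G 0 j" if "i < m" "j < m" for i j
  proof -
    have "0 < m" using assms(2) by simp
    show ?thesis
      unfolding factor[OF that(1) \<open>0 < m\<close> that(2)] blk_transpose[OF G sym \<open>0 < m\<close> that(1)] ..
  qed
  show ?thesis using SO gram by blast
qed

end
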